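(* Let $m\ge 4$ and let $b_{\lfloor\log m\rfloor}b_{\lfloor\log m\rfloor-1}\cdots b_1b_0$ be the binary representation of $m$, so $b_{\lfloor\log m\rfloor}=1$. On input $a^m$, $\mathsf{RePair}$ produces the rules $X_1\to aa$, $X_i\to X_{i-1}X_{i-1}$ for $2\le i\le\lfloor\log m\rfloor-1$, and the start rule $$S\to X_{\lfloor\log m\rfloor-1}X_{\lfloor\log m\rfloor-1}f_{\lfloor\log m\rfloor-1}(b_{\lfloor\log m\rfloor-1})\cdots f_1(b_1)f_0(b_0).$$ Here $f_0(1)=a$, $f_0(0)=\varepsilon$, and for $i\ge1$, $f_i(1)=X_i$, $f_i(0)=\varepsilon$. In particular, each $X_i$ derives $a^{2^i}$.
   Context: All logarithms are to base 2. A straight-line program (SLP) is a context-free grammar $\mathbb A=(N,\Sigma,P,S)$ with exactly one production $A\to w$, $w\in(N\cup\Sigma)^+$, per nonterminal $A$, and an acyclic "occurs-in-right-hand-side" relation; it derives a single word. For an SLP, a word $\gamma$ over $N\cup\Sigma$ is a maximal string if $|\gamma|\ge2$, $\gamma$ occurs at least twice without overlap in the right-hand sides, and no strictly longer word occurs at least as many times without overlap in the right-hand sides. $\mathsf{RePair}$ on input $w$ starts with the single rule $S\to w$. In each round it selects a maximal string $\gamma$ with the largest number of non-overlapping occurrences, replaces a largest set of pairwise non-overlapping occurrences of $\gamma$ (chosen from left to right) in the right-hand sides by a fresh nonterminal $X$, and adds $X\to\gamma$. It stops when no maximal string exists. *)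

theory Defs
  imports Complex_Main
begin

text \<open>Symbols: terminals T c, nonterminals N n.  The start symbol S is N 0;
  the nonterminal introduced in the k-th round of RePair is N k (fresh naming convention).\<close>
datatype 't sym = T 't | N nat

type_synonym 't gram = "nat \<rightharpoonup> 't sym list"

definition occs :: "'t gram \<Rightarrow> 't sym list \<Rightarrow> (nat \<times> nat) set" where
  "occs G \<gamma> = {(A, p). A \<in> dom G \<and> p + length \<gamma> \<le> length (the (G A))
                        \<and> take (length \<gamma>) (drop p (the (G A))) = \<gamma>}"

definition nonoverlap :: "'t sym list \<Rightarrow> (nat \<times> nat) set \<Rightarrow> bool" where
  "nonoverlap \<gamma> O' = (\<forall>(A, p) \<in> O'. \<forall>(B, q) \<in> O'. A = B \<and> p < q \<longrightarrow> p + length \<gamma> \<le> q)"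

definition nocc :: "'t gram \<Rightarrow> 't sym list \<Rightarrow> nat" where
  "nocc G \<gamma> = Max {card O' | O'. O' \<subseteq> occs G \<gamma> \<and> nonoverlap \<gamma> O'}"

definition maximal_string :: "'t gram \<Rightarrow> 't sym list \<Rightarrow> bool" where
  "maximal_string G \<gamma> = (length \<gamma> \<ge> 2 \<and> nocc G \<gamma> \<ge> 2 \<and>
     (\<forall>\<delta>. length \<delta> > length \<gamma> \<longrightarrow> nocc G \<delta> < nocc G \<gamma>))"

function repl :: "'t sym list \<Rightarrow> 't sym \<Rightarrow> 't sym list \<Rightarrow> 't sym list" where
  "repl \<gamma> X [] = []"
| "repl \<gamma> X (x # xs) =
     (if \<gamma> \<noteq> [] \<and> take (length \<gamma>) (x # xs) = \<gamma>
      then X # repl \<gamma> X (drop (length \<gamma>) (x # xs))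
      else x # repl \<gamma> X xs)"
  by pat_completeness auto
termination by (relation "measure (\<lambda>(_, _, w). length w)") auto

definition repair_step :: "'t gram \<Rightarrow> 't gram \<Rightarrow> bool" where
  "repair_step G G' = (\<exists>\<gamma>. maximal_string G \<gamma> \<and>
      (\<forall>\<delta>. maximal_string G \<delta> \<longrightarrow> nocc G \<delta> \<le> nocc G \<gamma>) \<and>
      G' = (\<lambda>A. map_option (repl \<gamma> (N (card (dom G)))) (G A))(card (dom G) \<mapsto> \<gamma>))"

definition repair_final :: "'t gram \<Rightarrow> bool" where
  "repair_final G = (\<not> (\<exists>\<gamma>. maximal_string G \<gamma>))"

definition repair_init :: "'t \<Rightarrow> nat \<Rightarrow> 't gram" where
  "repair_init a m = [0 \<mapsto> replicate m (T a)]"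

text \<open>Derivation: substitute all nonterminals simultaneously, |dom G| times
  (enough for an acyclic grammar).\<close>
definition subst_once :: "'t gram \<Rightarrow> 't sym list \<Rightarrow> 't sym list" where
  "subst_once G w = concat (map (\<lambda>s. case s of T c \<Rightarrow> [T c]
       | N n \<Rightarrow> (case G n of Some r \<Rightarrow> r | None \<Rightarrow> [N n])) w)"

definition expand :: "'t gram \<Rightarrow> 't sym list \<Rightarrow> 't sym list" where
  "expand G w = (subst_once G ^^ card (dom G)) w"

end

theory Submission
  imports Defs
begin

text \<open>After \<open>j\<close> rounds, RePair on \<open>a\<^sup>m\<close> has produced \<open>X\<^sub>1 \<rightarrow> aa\<close> and
  \<open>X\<^sub>i \<rightarrow> X\<^bsub>i-1\<^esub>X\<^bsub>i-1\<^esub>\<close> for \<open>2 \<le> i \<le> j\<close>, and the start rule is \<open>X\<^sub>j\<close> repeated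
  \<open>c = m div 2\<^sup>j\<close> times followed by the \<open>X\<^sub>i\<close> for the set bits \<open>i < j\<close> of \<open>m\<close>. In this grammar
  every bigram other than \<open>X\<^sub>jX\<^sub>j\<close> occurs only once, so a string occurs at most once unless it
  is a run \<open>X\<^sub>j\<^sup>l\<close>, which has at most \<open>c div l\<close> non-overlapping occurrences; the pair
  \<open>X\<^sub>jX\<^sub>j\<close> attains \<open>c div 2\<close>. Hence while \<open>c \<ge> 4\<close> the pair \<open>X\<^sub>jX\<^sub>j\<close> is the only possible
  choice of RePair, and replacing it halves \<open>c\<close> and gives the grammar of round \<open>j + 1\<close>; once
  \<open>c < 4\<close> no string occurs twice and RePair stops. This happens at \<open>j = \<lfloor>log m\<rfloor> - 1\<close>, where
  \<open>c \<in> {2, 3}\<close>: the start rule begins with \<open>X\<^sub>jX\<^sub>j\<close>, followed by \<open>X\<^sub>j\<close> iff bit \<open>j\<close> of \<open>m\<close>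
  is set.\<close>

lemma finite_occs: "finite (dom G) \<Longrightarrow> finite (occs G \<gamma>)"
proof -
  assume "finite (dom G)"
  moreover have "occs G \<gamma> \<subseteq> (SIGMA A:dom G. {..length (the (G A))})"
    by (auto simp: occs_def)
  ultimately show ?thesis
    by (meson finite_SigmaI finite_atMost finite_subset)
qed

lemma nonoverlapD:
  "nonoverlap \<gamma> O' \<Longrightarrow> (A, p) \<in> O' \<Longrightarrow> (A, q) \<in> O' \<Longrightarrow> p < q \<Longrightarrow> p + length \<gamma> \<le> q"
  unfolding nonoverlap_def by fast

lemma nocc_leI:
  assumes "\<And>O'. O' \<subseteq> occs G \<gamma> \<Longrightarrow> nonoverlap \<gamma> O' \<Longrightarrow> card O' \<le> n"
  shows "nocc G \<gamma> \<le> n"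
proof -
  let ?S = "{card O' | O'. O' \<subseteq> occs G \<gamma> \<and> nonoverlap \<gamma> O'}"
  have "?S \<subseteq> {..n}"
    using assms by auto
  then have "finite ?S"
    by (rule finite_subset) simp
  moreover have "card {} \<in> ?S"
    by (rule CollectI, rule exI[of _ "{}"]) (simp add: nonoverlap_def)
  ultimately show ?thesis
    unfolding nocc_def using assms by (subst Max_le_iff) blast+
qed

lemma card_le_nocc:
  assumes "finite (dom G)" "O' \<subseteq> occs G \<gamma>" "nonoverlap \<gamma> O'"
  shows "card O' \<le> nocc G \<gamma>"
proof -
  let ?S = "{card O' | O'. O' \<subseteq> occs G \<gamma> \<and> nonoverlap \<gamma> O'}"
  have "?S \<subseteq> {..card (occs G \<gamma>)}"
    using card_mono[OF finite_occs[OF assms(1)]] by auto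
  then have "finite ?S"
    by (rule finite_subset) simp
  moreover have "card O' \<in> ?S"
    using assms by blast
  ultimately show ?thesis
    unfolding nocc_def by (rule Max_ge)
qed

lemma occs_nth:
  assumes "(A, p) \<in> occs G \<delta>" "i < length \<delta>"
  shows "\<delta> ! i = the (G A) ! (p + i)"
proof -
  have "p + length \<delta> \<le> length (the (G A))" "take (length \<delta>) (drop p (the (G A))) = \<delta>"
    using assms(1) by (auto simp: occs_def)
  then have "\<delta> ! i = take (length \<delta>) (drop p (the (G A))) ! i"
    by simp
  then show ?thesis
    using \<open>p + length \<delta> \<le> length (the (G A))\<close> assms(2) by simp
qed

lemma nocc_le_one:
  assumes "\<And>x y. x \<in> occs G \<delta> \<Longrightarrow> y \<in> occs G \<delta> \<Longrightarrow> x = y"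
  shows "nocc G \<delta> \<le> 1"
proof (rule nocc_leI)
  fix O' assume "O' \<subseteq> occs G \<delta>"
  then have "\<forall>x\<in>O'. \<forall>y\<in>O'. x = y"
    using assms by blast
  then show "card O' \<le> 1"
    by (cases "finite O'") (simp_all add: card_le_Suc0_iff_eq)
qed

lemma card_separated_le:
  fixes P :: "nat set"
  assumes "0 < l" "\<And>p. p \<in> P \<Longrightarrow> p + l \<le> c"
    and "\<And>p q. p \<in> P \<Longrightarrow> q \<in> P \<Longrightarrow> p < q \<Longrightarrow> p + l \<le> q"
  shows "card P \<le> c div l"
proof -
  have lt: "p div l < q div l" if "p + l \<le> q" for p q
  proof -
    have "p div l < (p + l) div l"
      using \<open>0 < l\<close> by simp
    also have "\<dots> \<le> q div l"
      using that by (rule div_le_mono)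
    finally show ?thesis .
  qed
  have "inj_on (\<lambda>p. p div l) P"
  proof (rule inj_onI)
    fix p q assume "p \<in> P" "q \<in> P" "p div l = q div l"
    then show "p = q"
      using lt assms(3) by (metis less_irrefl linorder_neqE_nat)
  qed
  moreover have "(\<lambda>p. p div l) ` P \<subseteq> {..<c div l}"
  proof
    fix x assume "x \<in> (\<lambda>p. p div l) ` P"
    then obtain p where "p \<in> P" "x = p div l"
      by blast
    then have "x < (p + l) div l"
      using lt[of p "p + l"] by simp
    also have "\<dots> \<le> c div l"
      using assms(2)[OF \<open>p \<in> P\<close>] by (rule div_le_mono)
    finally show "x \<in> {..<c div l}"
      by simp
  qed
  ultimately show ?thesis
    using card_inj_on_le[of _ P "{..<c div l}"] by simp
qed

lemma repl_pair_absent: "s \<notin> set t \<Longrightarrow> repl [s, s] X t = t"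
  by (induction t) auto

lemma repl_pair_replicate:
  "s \<notin> set t \<Longrightarrow>
   repl [s, s] X (replicate c s @ t) = replicate (c div 2) X @ (if odd c then [s] else []) @ t"
proof (induction c rule: less_induct)
  case (less c)
  consider "c = 0" | "c = 1" | c' where "c = Suc (Suc c')"
    by (metis One_nat_def not0_implies_Suc)
  then show ?case
  proof cases
    case 1
    then show ?thesis
      using repl_pair_absent[OF less.prems] by simp
  next
    case 2
    then show ?thesis
      using less.prems by (cases t) (auto simp: repl_pair_absent)
  next
    case 3
    then show ?thesis
      using less.IH[of c'] less.prems by simp
  qed
qed

lemma repair_step_not_final: "repair_step G G' \<Longrightarrow> \<not> repair_final G"
  unfolding repair_step_def repair_final_def by blast

definition level_sym :: "'t \<Rightarrow> nat \<Rightarrow> 't sym" where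
  "level_sym a i = (if i = 0 then T a else N i)"

lemma level_sym_eq_iff [simp]: "level_sym a i = level_sym a i' \<longleftrightarrow> i = i'"
  by (auto simp: level_sym_def)

definition start_levels :: "nat \<Rightarrow> nat \<Rightarrow> nat list" where
  "start_levels m j = replicate (m div 2 ^ j) j @ filter (\<lambda>i. odd (m div 2 ^ i)) (rev [0..<j])"

definition stage_rhs :: "nat \<Rightarrow> nat \<Rightarrow> nat \<Rightarrow> nat list" where
  "stage_rhs m j A = (if A = 0 then start_levels m j else [A - 1, A - 1])"

text \<open>Right-hand sides are stored as lists
  of levels: level \<open>i > 0\<close> is the nonterminal \<open>X\<^sub>i = N i\<close> and level 0 is the letter \<open>a\<close>.\<close>
definition stage :: "'t \<Rightarrow> nat \<Rightarrow> nat \<Rightarrow> 't gram" where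
  "stage a m j = (\<lambda>A. if A \<le> j then Some (map (level_sym a) (stage_rhs m j A)) else None)"

lemma dom_stage: "dom (stage a m j) = {..j}"
  by (auto simp: stage_def split: if_splits)

lemma card_dom_stage: "card (dom (stage a m j)) = Suc j"
  by (simp add: dom_stage)

lemma start_levels_nth_eq_top_iff:
  assumes "i < length (start_levels m j)"
  shows "start_levels m j ! i = j \<longleftrightarrow> i < m div 2 ^ j"
proof (cases "i < m div 2 ^ j")
  case False
  let ?bits = "filter (\<lambda>i. odd (m div 2 ^ i)) (rev [0..<j])"
  have "i - m div 2 ^ j < length ?bits"
    using assms False by (simp add: start_levels_def)
  then have "?bits ! (i - m div 2 ^ j) < j"
    using nth_mem by fastforce
  then show ?thesis
    using False by (simp add: start_levels_def nth_append)
qed (simp add: start_levels_def nth_append)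

lemma start_levels_nth_inj:
  assumes "i < length (start_levels m j)" "i' < length (start_levels m j)"
    and "start_levels m j ! i = start_levels m j ! i'" "start_levels m j ! i \<noteq> j"
  shows "i = i'"
proof -
  let ?c = "m div 2 ^ j"
  let ?bits = "filter (\<lambda>i. odd (m div 2 ^ i)) (rev [0..<j])"
  have "\<not> i < ?c" "\<not> i' < ?c"
    using start_levels_nth_eq_top_iff assms by metis+
  then have "?bits ! (i - ?c) = ?bits ! (i' - ?c)"
    "i - ?c < length ?bits" "i' - ?c < length ?bits"
    using assms by (simp_all add: start_levels_def nth_append)
  then have "i - ?c = i' - ?c"
    using nth_eq_iff_index_eq[of ?bits] by simp
  then show ?thesis
    using \<open>\<not> i < ?c\<close> \<open>\<not> i' < ?c\<close> by simp
qed

lemma stage_rhs_nonstart: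
  assumes "A \<noteq> 0" "A \<le> j" "x < length (stage_rhs m j A)"
  shows "stage_rhs m j A ! x = A - 1" "A - 1 \<noteq> j" "x \<le> 1"
  using assms by (auto simp: stage_rhs_def nth_Cons split: nat.splits)

lemma stage_bigram_unique:
  assumes "A \<le> j" "B \<le> j" "Suc x < length (stage_rhs m j A)" "Suc y < length (stage_rhs m j B)"
    and "stage_rhs m j A ! x = stage_rhs m j B ! y"
    and "stage_rhs m j A ! Suc x = stage_rhs m j B ! Suc y"
    and "\<not> (stage_rhs m j A ! x = j \<and> stage_rhs m j A ! Suc x = j)"
  shows "A = B \<and> x = y"
proof (cases "A = 0"; cases "B = 0")
  assume "A = 0" "B = 0"
  show ?thesis
  proof (cases "stage_rhs m j A ! Suc x = j")
    case True
    then have "Suc x < m div 2 ^ j"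
      using start_levels_nth_eq_top_iff assms(3) \<open>A = 0\<close> by (simp add: stage_rhs_def)
    then have "stage_rhs m j A ! x = j"
      using start_levels_nth_eq_top_iff[of x m j] assms(3) \<open>A = 0\<close> by (simp add: stage_rhs_def)
    then show ?thesis
      using True assms(7) by simp
  next
    case False
    then show ?thesis
      using start_levels_nth_inj[of "Suc x" m j "Suc y"] assms \<open>A = 0\<close> \<open>B = 0\<close>
      by (simp add: stage_rhs_def)
  qed
next
  assume "A = 0" "B \<noteq> 0"
  then have "start_levels m j ! x = start_levels m j ! Suc x" "start_levels m j ! x \<noteq> j"
    using stage_rhs_nonstart[of B j y m] stage_rhs_nonstart[of B j "Suc y" m] assms
    by (simp_all add: stage_rhs_def)
  then show ?thesis
    using start_levels_nth_inj[of x m j "Suc x"] assms(3) \<open>A = 0\<close> by (simp add: stage_rhs_def)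
next
  assume "A \<noteq> 0" "B = 0"
  then have "start_levels m j ! y = start_levels m j ! Suc y" "start_levels m j ! y \<noteq> j"
    using stage_rhs_nonstart[of A j x m] stage_rhs_nonstart[of A j "Suc x" m] assms
    by (simp_all add: stage_rhs_def)
  then show ?thesis
    using start_levels_nth_inj[of y m j "Suc y"] assms(4) \<open>B = 0\<close> by (simp add: stage_rhs_def)
next
  assume "A \<noteq> 0" "B \<noteq> 0"
  then show ?thesis
    using stage_rhs_nonstart[of A j x m] stage_rhs_nonstart[of A j "Suc x" m]
      stage_rhs_nonstart[of B j y m] stage_rhs_nonstart[of B j "Suc y" m] assms
    by simp
qed

lemma occs_stage:
  assumes "(A, p) \<in> occs (stage a m j) \<delta>"
  shows "A \<le> j" "p + length \<delta> \<le> length (stage_rhs m j A)"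
    and "\<And>i. i < length \<delta> \<Longrightarrow> \<delta> ! i = level_sym a (stage_rhs m j A ! (p + i))"
proof -
  show "A \<le> j"
    using assms by (auto simp: occs_def dom_stage)
  then show "p + length \<delta> \<le> length (stage_rhs m j A)"
    using assms by (auto simp: occs_def stage_def)
  fix i assume "i < length \<delta>"
  then show "\<delta> ! i = level_sym a (stage_rhs m j A ! (p + i))"
    using occs_nth[OF assms] \<open>A \<le> j\<close> \<open>p + length \<delta> \<le> length (stage_rhs m j A)\<close>
    by (simp add: stage_def)
qed

lemma nocc_stage_le_one:
  assumes "Suc i < length \<delta>" "\<not> (\<delta> ! i = level_sym a j \<and> \<delta> ! Suc i = level_sym a j)"
  shows "nocc (stage a m j) \<delta> \<le> 1"
proof (rule nocc_le_one)
  fix x y assume "x \<in> occs (stage a m j) \<delta>" "y \<in> occs (stage a m j) \<delta>"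
  moreover obtain A p B q where "x = (A, p)" "y = (B, q)"
    by fastforce
  ultimately have occA: "(A, p) \<in> occs (stage a m j) \<delta>" and occB: "(B, q) \<in> occs (stage a m j) \<delta>"
    by simp_all
  note symA = occs_stage(3)[OF occA] and symB = occs_stage(3)[OF occB]
  have "stage_rhs m j A ! (p + i) = stage_rhs m j B ! (q + i)"
    "stage_rhs m j A ! Suc (p + i) = stage_rhs m j B ! Suc (q + i)"
    "\<not> (stage_rhs m j A ! (p + i) = j \<and> stage_rhs m j A ! Suc (p + i) = j)"
    using symA[of i] symB[of i] symA[of "Suc i"] symB[of "Suc i"] assms by auto
  then have "A = B \<and> p + i = q + i"
    using occs_stage(1,2)[OF occA] occs_stage(1,2)[OF occB] assms(1)
    by (intro stage_bigram_unique) auto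
  then show "x = y"
    using \<open>x = (A, p)\<close> \<open>y = (B, q)\<close> by simp
qed

lemma occs_stage_top_run:
  assumes "(A, p) \<in> occs (stage a m j) (replicate l (level_sym a j))" "2 \<le> l"
  shows "A = 0" "p + l \<le> m div 2 ^ j"
proof -
  note occ = occs_stage[OF assms(1)]
  have "stage_rhs m j A ! p = j" "p + l \<le> length (stage_rhs m j A)"
    using occ(2) occ(3)[of 0] assms(2) by auto
  moreover have "p < length (stage_rhs m j A)"
    using \<open>p + l \<le> length (stage_rhs m j A)\<close> assms(2) by simp
  ultimately show "A = 0"
    using stage_rhs_nonstart(1,2)[of A j p m] occ(1) by metis
  have "stage_rhs m j A ! (p + (l - 1)) = j"
    using occ(3)[of "l - 1"] assms(2) by simp
  then have "p + (l - 1) < m div 2 ^ j"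
    using start_levels_nth_eq_top_iff[of "p + (l - 1)" m j] occ(2) assms(2) \<open>A = 0\<close>
    by (simp add: stage_rhs_def)
  then show "p + l \<le> m div 2 ^ j"
    using assms(2) by simp
qed

lemma nocc_stage_top_run_le:
  assumes "2 \<le> l"
  shows "nocc (stage a m j) (replicate l (level_sym a j)) \<le> m div 2 ^ j div l"
proof (rule nocc_leI)
  fix O' assume sub: "O' \<subseteq> occs (stage a m j) (replicate l (level_sym a j))"
    and no: "nonoverlap (replicate l (level_sym a j)) O'"
  have start: "A = 0 \<and> p + l \<le> m div 2 ^ j" if "(A, p) \<in> O'" for A p
    using occs_stage_top_run[OF subsetD[OF sub that] assms] by simp
  have "card (snd ` O') \<le> m div 2 ^ j div l"
  proof (rule card_separated_le)
    fix p assume "p \<in> snd ` O'"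
    then obtain A where "(A, p) \<in> O'"
      by (auto simp: image_iff)
    then show "p + l \<le> m div 2 ^ j"
      using start by blast
  next
    fix p q assume "p \<in> snd ` O'" "q \<in> snd ` O'" "p < q"
    then obtain A B where "(A, p) \<in> O'" "(B, q) \<in> O'"
      by (auto simp: image_iff)
    then have "(0, p) \<in> O'" "(0, q) \<in> O'"
      using start by blast+
    then show "p + l \<le> q"
      using nonoverlapD[OF no _ _ \<open>p < q\<close>] by simp
  qed (use assms in simp)
  moreover have "inj_on snd O'"
  proof (rule inj_onI)
    fix x y assume "x \<in> O'" "y \<in> O'" "snd x = snd y"
    moreover have "fst x = 0" "fst y = 0"
      using start \<open>x \<in> O'\<close> \<open>y \<in> O'\<close> by (metis prod.collapse)+
    ultimately show "x = y"
      by (simp add: prod_eq_iff)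
  qed
  ultimately show "card O' \<le> m div 2 ^ j div l"
    by (simp add: card_image)
qed

lemma nocc_stage_top_pair_ge: "m div 2 ^ j div 2 \<le> nocc (stage a m j) [level_sym a j, level_sym a j]"
proof -
  let ?c = "m div 2 ^ j"
  let ?O = "(\<lambda>t. (0::nat, 2 * t)) ` {..<?c div 2}"
  have sub: "?O \<subseteq> occs (stage a m j) [level_sym a j, level_sym a j]"
  proof
    fix x assume "x \<in> ?O"
    then obtain t where t: "t < ?c div 2" "x = (0, 2 * t)"
      by blast
    have len: "?c \<le> length (stage_rhs m j 0)"
      by (simp add: stage_rhs_def start_levels_def)
    have "Suc (2 * t) < ?c"
      using t by linarith
    then have "stage_rhs m j 0 ! (2 * t) = j" "stage_rhs m j 0 ! Suc (2 * t) = j"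
      using start_levels_nth_eq_top_iff[of "2 * t" m j]
        start_levels_nth_eq_top_iff[of "Suc (2 * t)" m j] len
      by (simp_all add: stage_rhs_def)
    then have "take (length [level_sym a j, level_sym a j]) (drop (2 * t) (the (stage a m j 0)))
        = [level_sym a j, level_sym a j]"
      using \<open>Suc (2 * t) < ?c\<close> len by (simp add: stage_def take_Suc_conv_app_nth)
    then show "x \<in> occs (stage a m j) [level_sym a j, level_sym a j]"
      using t \<open>Suc (2 * t) < ?c\<close> len by (simp add: occs_def dom_stage) (simp add: stage_def)
  qed
  have "nonoverlap [level_sym a j, level_sym a j] ?O"
    by (auto simp: nonoverlap_def)
  then have "card ?O \<le> nocc (stage a m j) [level_sym a j, level_sym a j]"
    using card_le_nocc[OF _ sub] by (simp add: dom_stage)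
  moreover have "card ?O = ?c div 2"
    by (subst card_image) (auto simp: inj_on_def)
  ultimately show ?thesis
    by simp
qed

lemma nocc_stage_cases:
  assumes "2 \<le> length \<delta>"
  obtains "nocc (stage a m j) \<delta> \<le> 1"
  | "\<delta> = replicate (length \<delta>) (level_sym a j)" "nocc (stage a m j) \<delta> \<le> m div 2 ^ j div length \<delta>"
proof (cases "\<exists>i. Suc i < length \<delta> \<and> \<not> (\<delta> ! i = level_sym a j \<and> \<delta> ! Suc i = level_sym a j)")
  case True
  then obtain i where "Suc i < length \<delta>" "\<not> (\<delta> ! i = level_sym a j \<and> \<delta> ! Suc i = level_sym a j)"
    by blast
  then show ?thesis
    using nocc_stage_le_one[of i \<delta> a j m] that(1) by blast
next
  case False
  have "\<delta> ! i = level_sym a j" if "i < length \<delta>" for i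
  proof (cases i)
    case 0
    have "Suc 0 < length \<delta>"
      using assms by simp
    then show ?thesis
      using False 0 by blast
  next
    case (Suc i')
    then show ?thesis
      using False that by blast
  qed
  then have "\<delta> = replicate (length \<delta>) (level_sym a j)"
    by (simp add: list_eq_iff_nth_eq)
  then show ?thesis
    using that(2) nocc_stage_top_run_le[OF assms, of a m j] by simp
qed

lemma halves_of_ge_four:
  fixes c :: nat
  assumes "4 \<le> c"
  shows "2 \<le> c div 2" "c div 3 < c div 2"
  using assms by presburger+

lemma nocc_stage_lt_top_pair:
  assumes "4 \<le> m div 2 ^ j" "2 \<le> length \<delta>" "\<delta> \<noteq> [level_sym a j, level_sym a j]"
  shows "nocc (stage a m j) \<delta> < nocc (stage a m j) [level_sym a j, level_sym a j]"
proof -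
  let ?c = "m div 2 ^ j"
  have pair: "?c div 2 \<le> nocc (stage a m j) [level_sym a j, level_sym a j]"
    by (rule nocc_stage_top_pair_ge)
  have "2 \<le> ?c div 2" "?c div 3 < ?c div 2"
    using assms(1) by (simp_all add: halves_of_ge_four)
  show ?thesis
  proof (rule nocc_stage_cases[OF assms(2), of a m j])
    assume "nocc (stage a m j) \<delta> \<le> 1"
    then show ?thesis
      using pair \<open>2 \<le> ?c div 2\<close> by linarith
  next
    assume run: "\<delta> = replicate (length \<delta>) (level_sym a j)"
      and le: "nocc (stage a m j) \<delta> \<le> ?c div length \<delta>"
    have "length \<delta> \<noteq> 2"
      using run assms(3) by (metis numeral_2_eq_2 replicate_0 replicate_Suc)
    then have "?c div length \<delta> \<le> ?c div 3"
      using assms(2) by (intro div_le_mono2) auto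
    then show ?thesis
      using le pair \<open>?c div 3 < ?c div 2\<close> by linarith
  qed
qed

lemma stage_not_maximal_string:
  assumes "m div 2 ^ j < 4"
  shows "\<not> maximal_string (stage a m j) \<gamma>"
proof
  assume "maximal_string (stage a m j) \<gamma>"
  then have len: "2 \<le> length \<gamma>" and frequent: "2 \<le> nocc (stage a m j) \<gamma>"
    by (auto simp: maximal_string_def)
  have "m div 2 ^ j div length \<gamma> \<le> m div 2 ^ j div 2"
    using len by (intro div_le_mono2) auto
  also have "\<dots> \<le> 3 div 2"
    using assms by (intro div_le_mono) simp
  finally have small: "m div 2 ^ j div length \<gamma> \<le> 1"
    by simp
  show False
    by (rule nocc_stage_cases[OF len, of a m j]) (use frequent small in linarith)+
qed

lemma maximal_string_stage_top_pair:
  assumes "4 \<le> m div 2 ^ j"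
  shows "maximal_string (stage a m j) [level_sym a j, level_sym a j]"
proof -
  have "2 \<le> m div 2 ^ j div 2"
    using assms by (rule halves_of_ge_four)
  then have "2 \<le> nocc (stage a m j) [level_sym a j, level_sym a j]"
    using nocc_stage_top_pair_ge[of m j a] by linarith
  moreover have "nocc (stage a m j) \<delta> < nocc (stage a m j) [level_sym a j, level_sym a j]"
    if "2 < length \<delta>" for \<delta>
    using nocc_stage_lt_top_pair[OF assms, of \<delta>] that by fastforce
  ultimately show ?thesis
    unfolding maximal_string_def by simp
qed

lemma stage_most_frequent_maximal_string_iff:
  assumes "4 \<le> m div 2 ^ j"
  shows "maximal_string (stage a m j) \<gamma>
      \<and> (\<forall>\<delta>. maximal_string (stage a m j) \<delta> \<longrightarrow> nocc (stage a m j) \<delta> \<le> nocc (stage a m j) \<gamma>)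
    \<longleftrightarrow> \<gamma> = [level_sym a j, level_sym a j]" (is "?most \<longleftrightarrow> _")
proof
  assume ?most
  then have max: "maximal_string (stage a m j) \<gamma>"
    and most: "\<forall>\<delta>. maximal_string (stage a m j) \<delta> \<longrightarrow> nocc (stage a m j) \<delta> \<le> nocc (stage a m j) \<gamma>"
    by (rule conjunct1, rule conjunct2)
  have ge: "nocc (stage a m j) [level_sym a j, level_sym a j] \<le> nocc (stage a m j) \<gamma>"
    using most maximal_string_stage_top_pair[OF assms, where a = a] by simp
  have len: "2 \<le> length \<gamma>"
    using max by (simp add: maximal_string_def)
  show "\<gamma> = [level_sym a j, level_sym a j]"
  proof (rule ccontr)
    assume "\<gamma> \<noteq> [level_sym a j, level_sym a j]"
    then show False
      using nocc_stage_lt_top_pair[OF assms len, where a = a] ge by simp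
  qed
next
  assume pair: "\<gamma> = [level_sym a j, level_sym a j]"
  have "nocc (stage a m j) \<delta> \<le> nocc (stage a m j) \<gamma>" if "maximal_string (stage a m j) \<delta>" for \<delta>
  proof (cases "\<delta> = \<gamma>")
    case False
    moreover have "2 \<le> length \<delta>"
      using that by (simp add: maximal_string_def)
    ultimately show ?thesis
      using nocc_stage_lt_top_pair[OF assms, where a = a] pair by (simp add: less_imp_le)
  qed (simp only: order_refl)
  then show ?most
    using maximal_string_stage_top_pair[OF assms, where a = a] pair by blast
qed

lemma stage_replace_top_pair:
  "(\<lambda>A. map_option (repl [level_sym a j, level_sym a j] (N (Suc j))) (stage a m j A))
     (Suc j \<mapsto> [level_sym a j, level_sym a j])
   = stage a m (Suc j)"
proof
  fix A
  let ?X = "level_sym a j"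
  let ?c = "m div 2 ^ j"
  let ?bits = "filter (\<lambda>i. odd (m div 2 ^ i)) (rev [0..<j])"
  have halve: "m div (2 * 2 ^ j) = ?c div 2"
    by (metis div_mult2_eq mult.commute)
  have "?X \<notin> set (map (level_sym a) ?bits)"
    by auto
  note repl_start = repl_pair_replicate[OF this, of "N (Suc j)" ?c]
  show "((\<lambda>A. map_option (repl [?X, ?X] (N (Suc j))) (stage a m j A))(Suc j \<mapsto> [?X, ?X])) A
        = stage a m (Suc j) A"
  proof (cases "A = 0")
    case True
    have "map (level_sym a) (stage_rhs m (Suc j) 0)
        = replicate (?c div 2) (N (Suc j)) @ (if odd ?c then [?X] else []) @ map (level_sym a) ?bits"
      by (simp add: stage_rhs_def start_levels_def halve level_sym_def)
    then show ?thesis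
      using True repl_start by (simp add: stage_def stage_rhs_def start_levels_def)
  next
    case False
    then show ?thesis
      using repl_pair_absent[of ?X "[level_sym a (A - 1), level_sym a (A - 1)]" "N (Suc j)"]
      by (auto simp: stage_def stage_rhs_def)
  qed
qed

lemma repair_step_stage_iff:
  assumes "4 \<le> m div 2 ^ j"
  shows "repair_step (stage a m j) G' \<longleftrightarrow> G' = stage a m (Suc j)"
proof -
  have "repair_step (stage a m j) G' \<longleftrightarrow>
      (\<exists>\<gamma>. \<gamma> = [level_sym a j, level_sym a j] \<and>
        G' = (\<lambda>A. map_option (repl \<gamma> (N (Suc j))) (stage a m j A))(Suc j \<mapsto> \<gamma>))"
    unfolding repair_step_def card_dom_stage conj_assoc[symmetric]
    by (simp only: stage_most_frequent_maximal_string_iff[OF assms, where a = a])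
  then show ?thesis
    by (simp add: stage_replace_top_pair)
qed

lemma repair_final_stage_iff: "repair_final (stage a m j) \<longleftrightarrow> m div 2 ^ j < 4"
proof
  assume "repair_final (stage a m j)"
  then show "m div 2 ^ j < 4"
    using maximal_string_stage_top_pair[where a = a] unfolding repair_final_def by (meson not_le)
next
  assume "m div 2 ^ j < 4"
  then show "repair_final (stage a m j)"
    using stage_not_maximal_string[where a = a] unfolding repair_final_def by blast
qed

lemma repair_reachable_stage_iff:
  assumes "\<And>j. j < K \<Longrightarrow> 4 \<le> m div 2 ^ j" "m div 2 ^ K < 4"
  shows "repair_step\<^sup>*\<^sup>* (stage a m 0) G \<longleftrightarrow> (\<exists>j\<le>K. G = stage a m j)"
proof
  assume "repair_step\<^sup>*\<^sup>* (stage a m 0) G"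
  then show "\<exists>j\<le>K. G = stage a m j"
  proof (induction rule: rtranclp_induct)
    case (step G G')
    then obtain j where "j \<le> K" "G = stage a m j"
      by blast
    moreover have "\<not> repair_final G"
      using step(2) by (rule repair_step_not_final)
    ultimately have "j < K"
      using assms(2) repair_final_stage_iff by (metis le_neq_implies_less)
    then have "G' = stage a m (Suc j)"
      using repair_step_stage_iff[OF assms(1), where a = a] step(2) \<open>G = stage a m j\<close> by blast
    then show ?case
      using \<open>j < K\<close> Suc_leI by blast
  qed auto
next
  have "repair_step\<^sup>*\<^sup>* (stage a m 0) (stage a m j)" if "j \<le> K" for j
    using that
  proof (induction j)
    case (Suc j)
    then have "repair_step (stage a m j) (stage a m (Suc j))"
      using repair_step_stage_iff[OF assms(1), where a = a] by simp
    then show ?case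
      using Suc by (simp add: rtranclp.rtrancl_into_rtrancl)
  qed simp
  then show "\<exists>j\<le>K. G = stage a m j \<Longrightarrow> repair_step\<^sup>*\<^sup>* (stage a m 0) G"
    by blast
qed

lemma repair_results_stage:
  assumes "\<And>j. j < K \<Longrightarrow> 4 \<le> m div 2 ^ j" "m div 2 ^ K < 4"
  shows "{G. repair_step\<^sup>*\<^sup>* (stage a m 0) G \<and> repair_final G} = {stage a m K}"
proof (intro equalityI subsetI)
  fix G assume "G \<in> {G. repair_step\<^sup>*\<^sup>* (stage a m 0) G \<and> repair_final G}"
  then have reach: "repair_step\<^sup>*\<^sup>* (stage a m 0) G" and final: "repair_final G"
    by simp_all
  obtain j where "j \<le> K" "G = stage a m j"
    using reach repair_reachable_stage_iff[OF assms, where a = a] by blast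
  moreover have "\<not> j < K"
  proof
    assume "j < K"
    then show False
      using assms(1)[of j] final \<open>G = stage a m j\<close> by (simp add: repair_final_stage_iff)
  qed
  ultimately show "G \<in> {stage a m K}"
    by simp
next
  fix G assume "G \<in> {stage a m K}"
  moreover have "repair_step\<^sup>*\<^sup>* (stage a m 0) (stage a m K)"
    using repair_reachable_stage_iff[OF assms, where a = a] by blast
  moreover have "repair_final (stage a m K)"
    using assms(2) by (simp add: repair_final_stage_iff)
  ultimately show "G \<in> {G. repair_step\<^sup>*\<^sup>* (stage a m 0) G \<and> repair_final G}"
    by simp
qed

lemma repair_init_eq_stage_0: "repair_init a m = stage a m 0"
  by (rule ext) (simp add: repair_init_def stage_def stage_rhs_def start_levels_def level_sym_def)

lemma concat_replicate_pair: "concat (replicate r [y, y]) = replicate (2 * r) y"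
  by (induction r) auto

lemma subst_once_stage_level_run:
  assumes "i \<le> K"
  shows "subst_once (stage a m K) (replicate r (level_sym a i))
       = (if i = 0 then replicate r (level_sym a 0) else replicate (2 * r) (level_sym a (i - 1)))"
proof (cases "i = 0")
  case False
  then have "stage a m K i = Some [level_sym a (i - 1), level_sym a (i - 1)]"
    using assms by (simp add: stage_def stage_rhs_def)
  then show ?thesis
    using False by (simp add: subst_once_def concat_replicate_pair level_sym_def)
qed (simp add: subst_once_def level_sym_def)

lemma funpow_subst_once_stage_level_run:
  assumes "i \<le> K"
  shows "(subst_once (stage a m K) ^^ n) (replicate r (level_sym a i))
       = replicate (r * 2 ^ min n i) (level_sym a (i - min n i))"
  using assms
proof (induction n arbitrary: r i)
  case (Suc n)
  show ?case
  proof (cases "i = 0")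
    case True
    then show ?thesis
      using Suc subst_once_stage_level_run[OF Suc.prems, of a m r]
      by (simp only: funpow_Suc_right comp_def) simp
  next
    case False
    have "(subst_once (stage a m K) ^^ Suc n) (replicate r (level_sym a i))
        = (subst_once (stage a m K) ^^ n) (replicate (2 * r) (level_sym a (i - 1)))"
      using subst_once_stage_level_run[OF Suc.prems, of a m r] False
      by (simp only: funpow_Suc_right comp_def) simp
    also have "\<dots> = replicate (2 * r * 2 ^ min n (i - 1)) (level_sym a (i - 1 - min n (i - 1)))"
      using Suc.IH[of "i - 1" "2 * r"] Suc.prems by simp
    also have "\<dots> = replicate (r * 2 ^ min (Suc n) i) (level_sym a (i - min (Suc n) i))"
    proof -
      have "min (Suc n) i = Suc (min n (i - 1))"
        using False by simp
      then show ?thesis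
        by (simp add: algebra_simps)
    qed
    finally show ?thesis .
  qed
qed simp

lemma expand_stage_level:
  assumes "i \<le> K"
  shows "expand (stage a m K) [level_sym a i] = replicate (2 ^ i) (T a)"
proof -
  have "expand (stage a m K) [level_sym a i]
      = (subst_once (stage a m K) ^^ Suc K) (replicate 1 (level_sym a i))"
    by (simp add: expand_def card_dom_stage)
  also have "\<dots> = replicate (2 ^ i) (level_sym a 0)"
    using funpow_subst_once_stage_level_run[OF assms, where a = a and m = m and n = "Suc K" and r = 1]
      assms by simp
  finally show ?thesis
    by (simp add: level_sym_def)
qed

lemma floor_log2_eq_Suc:
  fixes m :: nat
  assumes "4 \<le> m"
  obtains K where "nat \<lfloor>log 2 (real m)\<rfloor> = Suc K" "1 \<le> K" "2 ^ Suc K \<le> m" "m < 2 ^ Suc (Suc K)"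
proof -
  define k where "k = nat \<lfloor>log 2 (real m)\<rfloor>"
  have "\<lfloor>log (real (2::nat)) (real m)\<rfloor> = int k"
    using assms by (simp add: k_def)
  then have bounds: "2 ^ k \<le> m" "m < 2 ^ Suc k"
    using floor_log_nat_eq_powr_iff[of 2 m k] assms by simp_all
  then have "(2::nat) ^ 2 < 2 ^ Suc k"
    using assms by simp
  then have "2 < Suc k"
    by (rule power_less_imp_less_exp[rotated]) simp
  then show ?thesis
    using that[of "k - 1"] bounds unfolding k_def[symmetric] by simp
qed

lemma four_le_div_pow:
  fixes m K j :: nat
  assumes "2 ^ Suc K \<le> m" "j < K"
  shows "4 \<le> m div 2 ^ j"
proof -
  have "4 * 2 ^ j = (2::nat) ^ (j + 2)"
    by (simp add: power_add)
  also have "\<dots> \<le> 2 ^ Suc K"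
    using assms(2) by (intro power_increasing) auto
  finally show ?thesis
    using assms(1) by (simp add: less_eq_div_iff_mult_less_eq)
qed

lemma div_pow_top_bit:
  fixes m K :: nat
  assumes "2 ^ Suc K \<le> m" "m < 2 ^ Suc (Suc K)"
  shows "m div 2 ^ K \<in> {2, 3}"
proof -
  have "2 \<le> m div 2 ^ K" "m div 2 ^ K < 4"
    using assms by (simp_all add: less_eq_div_iff_mult_less_eq div_less_iff_less_mult mult.commute)
  then show ?thesis
    by auto
qed

lemma concat_map_level_bits:
  "concat (map (\<lambda>i. if P i then (if i = 0 then [T a] else [N i]) else []) xs)
   = map (level_sym a) (filter P xs)"
  by (induction xs) (auto simp: level_sym_def)

lemma stage_final_explicit:
  assumes "1 \<le> K" "m div 2 ^ K \<in> {2, 3}"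
  shows "stage a m K = (\<lambda>A.
    if A = 0 then Some ([N K, N K] @ concat (map
      (\<lambda>i. if odd (m div 2 ^ i) then (if i = 0 then [T a] else [N i]) else []) (rev [0..<Suc K])))
    else if A = 1 then Some [T a, T a]
    else if 2 \<le> A \<and> A \<le> K then Some [N (A - 1), N (A - 1)]
    else None)" (is "_ = ?G")
proof
  fix A
  have "replicate 2 (N K) = [N K, N K]" "replicate 3 (N K) = [N K, N K, N K]"
    by (simp_all add: numeral_2_eq_2 numeral_3_eq_3)
  then have "replicate (m div 2 ^ K) (N K) = [N K, N K] @ (if odd (m div 2 ^ K) then [N K] else [])"
    using assms(2) by auto
  then show "stage a m K A = ?G A"
    using assms(1)
    by (simp add: stage_def stage_rhs_def start_levels_def concat_map_level_bits level_sym_def)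
      (auto split: if_splits)
qed

theorem mainTheorem2:
  fixes m :: nat and a :: 't
  assumes "m \<ge> 4"
  defines "k \<equiv> nat \<lfloor>log 2 (real m)\<rfloor>"
  defines "b \<equiv> (\<lambda>i. odd (m div 2 ^ i))"
  defines "f \<equiv> (\<lambda>i. if b i then (if i = 0 then [T a] else [N i]) else [])"
  defines "Gexp \<equiv> (\<lambda>A. if A = 0 then Some ([N (k - 1), N (k - 1)] @ concat (map f (rev [0..<k])))
                      else if A = 1 then Some [T a, T a]
                      else if 2 \<le> A \<and> A \<le> k - 1 then Some [N (A - 1), N (A - 1)]
                      else None) :: 't gram"
  shows "{G. repair_step\<^sup>*\<^sup>* (repair_init a m) G \<and> repair_final G} = {Gexp}
         \<and> (\<forall>i \<in> {1..k - 1}. expand Gexp [N i] = replicate (2 ^ i) (T a))"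
proof -
  obtain K where K: "k = Suc K" "1 \<le> K" and bounds: "2 ^ Suc K \<le> m" "m < 2 ^ Suc (Suc K)"
    using floor_log2_eq_Suc[OF assms(1)] unfolding k_def by blast
  have top: "m div 2 ^ K \<in> {2, 3}"
    using div_pow_top_bit[OF bounds] .
  have GK: "Gexp = stage a m K"
    unfolding stage_final_explicit[OF K(2) top] by (rule ext) (simp add: Gexp_def f_def b_def K(1))
  have "{G. repair_step\<^sup>*\<^sup>* (repair_init a m) G \<and> repair_final G} = {stage a m K}"
    unfolding repair_init_eq_stage_0
    by (rule repair_results_stage) (use four_le_div_pow[OF bounds(1)] top in auto)
  moreover have "expand Gexp [N i] = replicate (2 ^ i) (T a)" if "i \<in> {1..k - 1}" for i
    using expand_stage_level[of i K a m] that K by (simp add: GK level_sym_def)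
  ultimately show ?thesis
    using GK by blast
qed

end
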